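(* Let $\mu\in\mathbb{R}$, let $V\equiv c$ be a real constant, and let $\Gamma(x)=\Gamma_{+}\,\chi_{[0,\infty)}(x)+\Gamma_{-}\,\chi_{(-\infty,0)}(x)$ with $\Gamma_\pm\in\mathbb{R}$ and $\Gamma_+\neq\Gamma_-$. Then the equation $$\phi''(x)+\mu\phi(x)-V(x)\phi(x)+\Gamma(x)|\phi(x)|^2\phi(x)=0,\qquad x\in\mathbb{R},$$ has no nontrivial (complex-valued) solution $\phi\in H^1(\mathbb{R})$.
   Context: $\chi_I$ denotes the indicator function of the set $I$. Solutions are understood in the weak sense (such solutions are $C^1$ on $\mathbb{R}$). *)

theory Defs
  imports "HOL-Analysis.Analysis"
begin

definition test_fun :: "(real \<Rightarrow> real) \<Rightarrow> bool" where
  "test_fun \<psi> \<longleftrightarrow> (\<forall>k x. ((deriv ^^ k) \<psi>) differentiable (at x))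
                     \<and> bounded {x. \<psi> x \<noteq> 0}"

definition L2 :: "(real \<Rightarrow> complex) \<Rightarrow> bool" where
  "L2 f \<longleftrightarrow> f \<in> borel_measurable lborel \<and> integrable lborel (\<lambda>x. (norm (f x))\<^sup>2)"

definition weak_deriv :: "(real \<Rightarrow> complex) \<Rightarrow> (real \<Rightarrow> complex) \<Rightarrow> bool" where
  "weak_deriv f g \<longleftrightarrow> (\<forall>\<psi>. test_fun \<psi> \<longrightarrow>
      integrable lborel (\<lambda>x. f x * complex_of_real (deriv \<psi> x)) \<and>
      integrable lborel (\<lambda>x. g x * complex_of_real (\<psi> x)) \<and>
      integral\<^sup>L lborel (\<lambda>x. f x * complex_of_real (deriv \<psi> x))
        = - integral\<^sup>L lborel (\<lambda>x. g x * complex_of_real (\<psi> x)))"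

definition H1 :: "(real \<Rightarrow> complex) \<Rightarrow> bool" where
  "H1 f \<longleftrightarrow> L2 f \<and> (\<exists>g. L2 g \<and> weak_deriv f g)"

definition weak_solution ::
  "real \<Rightarrow> (real \<Rightarrow> real) \<Rightarrow> (real \<Rightarrow> real) \<Rightarrow> (real \<Rightarrow> complex) \<Rightarrow> bool" where
  "weak_solution \<mu> V \<Gamma> \<phi> \<longleftrightarrow> (\<forall>\<psi>. test_fun \<psi> \<longrightarrow>
      integrable lborel (\<lambda>x. \<phi> x * complex_of_real (deriv (deriv \<psi>) x)
          + complex_of_real (\<mu> - V x + \<Gamma> x * (norm (\<phi> x))\<^sup>2) * \<phi> x * complex_of_real (\<psi> x)) \<and>
      integral\<^sup>L lborel (\<lambda>x. \<phi> x * complex_of_real (deriv (deriv \<psi>) x)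
          + complex_of_real (\<mu> - V x + \<Gamma> x * (norm (\<phi> x))\<^sup>2) * \<phi> x * complex_of_real (\<psi> x)) = 0)"

definition step_coeff :: "real \<Rightarrow> real \<Rightarrow> real \<Rightarrow> real" where
  "step_coeff Gp Gm x = (if x \<ge> 0 then Gp else Gm)"

end

theory Submission
  imports Defs "HOL-Computational_Algebra.Polynomial"
begin

text \<open>After modification on a null set, a weak \<open>H\<^sup>1\<close> solution is a \<open>C\<^sup>1\<close> function \<open>u\<close> whose
  derivative is \<open>C\<^sup>1\<close> on each closed half-line, where \<open>u'' = -(\<mu> - c + \<Gamma>\<^sub>\<plusminus> |u|\<^sup>2) u\<close>; this uses the
  fundamental lemma of the calculus of variations and the du Bois-Reymond lemma. On each half-line
  the energy \<open>|u'|\<^sup>2 + (\<mu> - c) |u|\<^sup>2 + \<Gamma>\<^sub>\<plusminus>/2 |u|\<^sup>4\<close> is conserved, and it must vanish because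
  \<open>|u|\<^sup>2 + |u'|\<^sup>2\<close> is integrable. As \<open>u\<close> and \<open>u'\<close> are continuous at \<open>0\<close>, the two energies at \<open>0\<close>
  differ by \<open>(\<Gamma>\<^sub>+ - \<Gamma>\<^sub>-)/2 |u(0)|\<^sup>4\<close>, so \<open>u(0) = u'(0) = 0\<close>, and a Gronwall estimate gives \<open>u = 0\<close>.\<close>

section \<open>Smooth functions and a smooth step\<close>

fun times_differentiable :: "nat \<Rightarrow> (real \<Rightarrow> real) \<Rightarrow> bool" where
  "times_differentiable 0 f = True"
| "times_differentiable (Suc n) f \<longleftrightarrow>
     (\<forall>x. f differentiable (at x)) \<and> times_differentiable n (deriv f)"

lemma times_differentiable_iff:
  "times_differentiable n f \<longleftrightarrow> (\<forall>k<n. \<forall>x. (deriv ^^ k) f differentiable (at x))"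
proof (induction n arbitrary: f)
  case (Suc n)
  have "(\<forall>k<Suc n. \<forall>x. (deriv ^^ k) f differentiable (at x)) \<longleftrightarrow>
        (\<forall>x. f differentiable (at x)) \<and> (\<forall>k<n. \<forall>x. (deriv ^^ k) (deriv f) differentiable (at x))"
    by (auto simp: less_Suc_eq_0_disj funpow_Suc_right simp del: funpow.simps)
  then show ?case using Suc by simp
qed simp

lemma test_fun_iff:
  "test_fun \<psi> \<longleftrightarrow> (\<forall>n. times_differentiable n \<psi>) \<and> bounded {x. \<psi> x \<noteq> 0}"
  unfolding test_fun_def times_differentiable_iff by blast

lemma times_differentiable_SucD: "times_differentiable (Suc n) f \<Longrightarrow> times_differentiable n f"
  by (induction n arbitrary: f) auto

lemma deriv_eqI: "(\<And>x. (f has_real_derivative f' x) (at x)) \<Longrightarrow> deriv f = f'"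
  by (rule ext) (rule DERIV_imp_deriv)

lemma times_differentiable_const: "times_differentiable n (\<lambda>x. c)"
proof (induction n arbitrary: c)
  case (Suc n)
  have "deriv (\<lambda>x. c) = (\<lambda>x. 0)" by (rule deriv_eqI) auto
  then show ?case using Suc by simp
qed simp

lemma times_differentiable_add:
  "times_differentiable n f \<Longrightarrow> times_differentiable n g \<Longrightarrow>
   times_differentiable n (\<lambda>x. f x + g x)"
proof (induction n arbitrary: f g)
  case (Suc n)
  then have df: "\<And>x. (f has_real_derivative deriv f x) (at x)"
    and dg: "\<And>x. (g has_real_derivative deriv g x) (at x)"
    by (auto simp: DERIV_deriv_iff_real_differentiable)
  have "deriv (\<lambda>x. f x + g x) = (\<lambda>x. deriv f x + deriv g x)"
    by (rule deriv_eqI) (auto intro!: derivative_eq_intros df dg)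
  moreover have "\<forall>x. (\<lambda>x. f x + g x) differentiable (at x)"
    using df dg by (auto intro!: derivative_eq_intros simp: real_differentiable_def)
  ultimately show ?case using Suc by simp
qed simp

lemma times_differentiable_mult:
  "times_differentiable n f \<Longrightarrow> times_differentiable n g \<Longrightarrow>
   times_differentiable n (\<lambda>x. f x * g x)"
proof (induction n arbitrary: f g)
  case (Suc n)
  then have df: "\<And>x. (f has_real_derivative deriv f x) (at x)"
    and dg: "\<And>x. (g has_real_derivative deriv g x) (at x)"
    by (auto simp: DERIV_deriv_iff_real_differentiable)
  have "deriv (\<lambda>x. f x * g x) = (\<lambda>x. deriv f x * g x + f x * deriv g x)"
    by (rule deriv_eqI) (auto intro!: derivative_eq_intros df dg)
  moreover have "\<forall>x. (\<lambda>x. f x * g x) differentiable (at x)"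
    using df dg by (auto intro!: derivative_eq_intros simp: real_differentiable_def)
  moreover have "times_differentiable n (\<lambda>x. deriv f x * g x + f x * deriv g x)"
    using Suc times_differentiable_SucD by (intro times_differentiable_add Suc.IH) auto
  ultimately show ?case by simp
qed simp

lemma times_differentiable_compose_affine:
  "times_differentiable n f \<Longrightarrow> times_differentiable n (\<lambda>x. f (a * x + b))"
proof (induction n arbitrary: f)
  case (Suc n)
  then have df: "\<And>x. (f has_real_derivative deriv f x) (at x)"
    by (auto simp: DERIV_deriv_iff_real_differentiable)
  have d: "((\<lambda>x. f (a * x + b)) has_real_derivative a * deriv f (a * x + b)) (at x)" for x
  proof -
    have "((\<lambda>x. a * x + b) has_real_derivative a) (at x)" by (auto intro!: derivative_eq_intros)
    from DERIV_chain2[OF df this] show ?thesis by (simp add: mult.commute)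
  qed
  then have "deriv (\<lambda>x. f (a * x + b)) = (\<lambda>x. a * deriv f (a * x + b))"
    by (rule deriv_eqI)
  moreover have "times_differentiable n (\<lambda>x. a * deriv f (a * x + b))"
    using Suc by (intro times_differentiable_mult times_differentiable_const) auto
  ultimately show ?case using d by (auto simp: real_differentiable_def)
qed simp

lemma times_differentiable_inverse:
  assumes "\<And>x. g x \<noteq> 0"
  shows "times_differentiable n g \<Longrightarrow> times_differentiable n (\<lambda>x. inverse (g x))"
proof (induction n)
  case (Suc n)
  then have dg: "\<And>x. (g has_real_derivative deriv g x) (at x)"
    by (auto simp: DERIV_deriv_iff_real_differentiable)
  have d: "((\<lambda>x. inverse (g x)) has_real_derivative
            (- 1) * (deriv g x * (inverse (g x) * inverse (g x)))) (at x)" for x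
    using assms by (auto intro!: derivative_eq_intros dg simp: power2_eq_square field_simps)
  then have "deriv (\<lambda>x. inverse (g x)) = (\<lambda>x. (- 1) * (deriv g x * (inverse (g x) * inverse (g x))))"
    by (rule deriv_eqI)
  moreover have "times_differentiable n (\<lambda>x. (- 1) * (deriv g x * (inverse (g x) * inverse (g x))))"
    using Suc times_differentiable_SucD by (intro times_differentiable_mult times_differentiable_const) auto
  ultimately show ?case using d by (auto simp: real_differentiable_def)
qed simp

lemma times_differentiable_antiderivative:
  assumes "\<And>x. (F has_real_derivative f x) (at x)" "times_differentiable n f"
  shows "times_differentiable (Suc n) F"
proof -
  have "deriv F = f" by (rule deriv_eqI) (rule assms)
  then show ?thesis using assms by (auto simp: real_differentiable_def)
qed

text \<open>The flat functions \<open>p(1/x) e\<^sup>-\<^sup>1\<^sup>/\<^sup>x\<close> form a class closed under differentiation, which gives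
  smoothness.\<close>
definition exp_inv_poly :: "real poly \<Rightarrow> real \<Rightarrow> real" where
  "exp_inv_poly p x = (if x > 0 then poly p (inverse x) * exp (- inverse x) else 0)"

lemma poly_times_exp_minus_tendsto_0:
  fixes p :: "real poly"
  shows "((\<lambda>y. poly p y * exp (- y)) \<longlongrightarrow> 0) at_top"
proof -
  have "((\<lambda>y::real. \<Sum>i\<le>degree p. coeff p i * (y ^ i / exp y)) \<longlongrightarrow> 0) at_top"
    by (intro tendsto_null_sum tendsto_mult_right_zero tendsto_power_div_exp_0)
  moreover have "(\<lambda>y. \<Sum>i\<le>degree p. coeff p i * (y ^ i / exp y)) = (\<lambda>y. poly p y * exp (- y))"
    by (auto simp: poly_altdef sum_distrib_right exp_minus divide_inverse mult.assoc)
  ultimately show ?thesis by simp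
qed

lemma exp_inv_poly_has_derivative_pos:
  assumes "x > 0"
  shows "(exp_inv_poly p has_real_derivative exp_inv_poly ([:0,0,1:] * (p - pderiv p)) x) (at x)"
proof -
  have "((\<lambda>x. poly p (inverse x) * exp (- inverse x)) has_real_derivative
      poly (pderiv p) (inverse x) * (- (inverse x * inverse x)) * exp (- inverse x)
      + poly p (inverse x) * (exp (- inverse x) * (inverse x * inverse x))) (at x)"
    using assms
    by (auto intro!: derivative_eq_intros DERIV_chain2[OF poly_DERIV]
             simp: power2_eq_square field_simps)
  moreover have "poly (pderiv p) (inverse x) * (- (inverse x * inverse x)) * exp (- inverse x)
      + poly p (inverse x) * (exp (- inverse x) * (inverse x * inverse x))
      = exp_inv_poly ([:0,0,1:] * (p - pderiv p)) x"
    using assms by (simp add: exp_inv_poly_def algebra_simps)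
  ultimately have "((\<lambda>x. poly p (inverse x) * exp (- inverse x)) has_real_derivative
      exp_inv_poly ([:0,0,1:] * (p - pderiv p)) x) (at x)" by simp
  then show ?thesis
    by (rule has_field_derivative_transform_within_open[of _ _ _ "{0<..}"])
       (use assms in \<open>auto simp: exp_inv_poly_def\<close>)
qed

lemma exp_inv_poly_has_derivative_0: "(exp_inv_poly p has_real_derivative 0) (at 0)"
proof -
  have lim: "((\<lambda>h. poly ([:0,1:] * p) (inverse h) * exp (- inverse h)) \<longlongrightarrow> 0) (at_right 0)"
    by (rule filterlim_compose[OF poly_times_exp_minus_tendsto_0 filterlim_inverse_at_top_right])
  have "((\<lambda>h. (exp_inv_poly p (0 + h) - exp_inv_poly p 0) / h) \<longlongrightarrow> 0) (at_right 0)"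
  proof (rule Lim_transform_within[OF lim, of 1])
    fix h :: real assume "h \<in> {0<..}"
    then show "poly ([:0,1:] * p) (inverse h) * exp (- inverse h)
             = (exp_inv_poly p (0 + h) - exp_inv_poly p 0) / h"
      by (simp add: exp_inv_poly_def field_simps)
  qed simp
  moreover have "((\<lambda>h. (exp_inv_poly p (0 + h) - exp_inv_poly p 0) / h) \<longlongrightarrow> 0) (at_left 0)"
    by (rule Lim_transform_within[OF tendsto_const, of 1]) (auto simp: exp_inv_poly_def)
  ultimately show ?thesis
    unfolding DERIV_def by (simp add: filterlim_split_at)
qed

lemma exp_inv_poly_has_derivative:
  "(exp_inv_poly p has_real_derivative exp_inv_poly ([:0,0,1:] * (p - pderiv p)) x) (at x)"
proof -
  consider "x > 0" | "x < 0" | "x = 0" by linarith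
  then show ?thesis
  proof cases
    case 2
    have "((\<lambda>x. 0) has_real_derivative 0) (at x)" by simp
    then have "(exp_inv_poly p has_real_derivative 0) (at x)"
      by (rule has_field_derivative_transform_within_open[of _ _ _ "{..<0}"])
         (use 2 in \<open>auto simp: exp_inv_poly_def\<close>)
    then show ?thesis using 2 by (simp add: exp_inv_poly_def)
  qed (use exp_inv_poly_has_derivative_pos exp_inv_poly_has_derivative_0
       in \<open>auto simp: exp_inv_poly_def\<close>)
qed

lemma times_differentiable_exp_inv_poly: "times_differentiable n (exp_inv_poly p)"
proof (induction n arbitrary: p)
  case (Suc n)
  have "deriv (exp_inv_poly p) = exp_inv_poly ([:0,0,1:] * (p - pderiv p))"
    by (rule deriv_eqI) (rule exp_inv_poly_has_derivative)
  then show ?case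
    using Suc exp_inv_poly_has_derivative by (auto simp: real_differentiable_def)
qed simp

definition smooth_step :: "real \<Rightarrow> real" where
  "smooth_step x = exp_inv_poly 1 x / (exp_inv_poly 1 x + exp_inv_poly 1 (1 - x))"

lemma smooth_step_denominator_pos: "exp_inv_poly 1 x + exp_inv_poly 1 (1 - x) > 0"
  by (cases "x > 0") (auto simp: exp_inv_poly_def add_pos_nonneg add_nonneg_pos)

lemma times_differentiable_smooth_step: "times_differentiable n smooth_step"
proof -
  have "times_differentiable n (\<lambda>x. exp_inv_poly 1 x *
          inverse (exp_inv_poly 1 ((- 1) * x + 1) + exp_inv_poly 1 x))"
  proof (intro times_differentiable_mult times_differentiable_exp_inv_poly
      times_differentiable_inverse times_differentiable_add times_differentiable_compose_affine)
    show "exp_inv_poly 1 ((- 1) * x + 1) + exp_inv_poly 1 x \<noteq> 0" for x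
      using smooth_step_denominator_pos[of x] by simp
  qed
  then show ?thesis unfolding smooth_step_def by (simp add: divide_inverse add.commute)
qed

lemma smooth_step_eq_0: "x \<le> 0 \<Longrightarrow> smooth_step x = 0"
  and smooth_step_eq_1: "x \<ge> 1 \<Longrightarrow> smooth_step x = 1"
  and smooth_step_nonneg: "smooth_step x \<ge> 0"
  and smooth_step_le_1: "smooth_step x \<le> 1"
  using smooth_step_denominator_pos[of x]
  by (auto simp: smooth_step_def exp_inv_poly_def)

lemma smooth_step_has_derivative: "(smooth_step has_real_derivative deriv smooth_step x) (at x)"
  using times_differentiable_smooth_step[of 1] by (simp add: DERIV_deriv_iff_real_differentiable)


section \<open>Test functions\<close>

lemma test_fun_support:
  assumes "test_fun \<psi>"
  obtains R where "R > 0" "\<And>x. R < \<bar>x\<bar> \<Longrightarrow> \<psi> x = 0"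
proof -
  from assms obtain a where a: "\<forall>x\<in>{x. \<psi> x \<noteq> 0}. \<bar>x\<bar> \<le> a"
    unfolding test_fun_def bounded_real by blast
  show ?thesis
    by (rule that[of "\<bar>a\<bar> + 1"]) (use a in \<open>force+\<close>)
qed

lemma test_fun_has_derivative: "test_fun \<psi> \<Longrightarrow> (\<psi> has_real_derivative deriv \<psi> x) (at x)"
  unfolding test_fun_def by (metis DERIV_deriv_iff_real_differentiable funpow_0)

lemma test_fun_continuous_on: "test_fun \<psi> \<Longrightarrow> continuous_on A \<psi>"
  by (meson DERIV_isCont continuous_at_imp_continuous_on test_fun_has_derivative)

lemma test_fun_borel_measurable: "test_fun \<psi> \<Longrightarrow> \<psi> \<in> borel_measurable borel"
  by (rule borel_measurable_continuous_onI) (rule test_fun_continuous_on)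

lemma deriv_locally_const:
  fixes f :: "real \<Rightarrow> real"
  assumes "open S" "x \<in> S" "\<And>y. y \<in> S \<Longrightarrow> f y = c"
  shows "deriv f x = 0"
proof -
  have "((\<lambda>_. c) has_real_derivative 0) (at x)" by simp
  then have "(f has_real_derivative 0) (at x)"
    by (rule has_field_derivative_transform_within_open[where S=S]) (use assms in auto)
  then show ?thesis by (rule DERIV_imp_deriv)
qed

lemma deriv_eq_0_outside:
  fixes \<psi> :: "real \<Rightarrow> real"
  assumes "\<And>x. R < \<bar>x\<bar> \<Longrightarrow> \<psi> x = 0" "R < \<bar>x\<bar>"
  shows "deriv \<psi> x = 0"
  by (rule deriv_locally_const[of "{x. R < \<bar>x\<bar>}"])
     (use assms in \<open>auto intro!: open_Collect_less continuous_intros\<close>)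

lemma bounded_if_vanishes_outside_interval:
  fixes f :: "real \<Rightarrow> 'a::zero"
  assumes "\<And>x. x < a \<or> b < x \<Longrightarrow> f x = 0"
  shows "bounded {x. f x \<noteq> 0}"
  by (rule bounded_subset[OF bounded_closed_interval[of a b]]) (use assms in force)

lemma test_fun_deriv: "test_fun \<psi> \<Longrightarrow> test_fun (deriv \<psi>)"
proof -
  assume t: "test_fun \<psi>"
  then obtain R where R: "\<And>x. R < \<bar>x\<bar> \<Longrightarrow> \<psi> x = 0" using test_fun_support by blast
  have "bounded {x. deriv \<psi> x \<noteq> 0}"
    by (rule bounded_if_vanishes_outside_interval[where a="- R" and b=R]) (use R deriv_eq_0_outside in force)
  moreover have "\<forall>n. times_differentiable n (deriv \<psi>)"
    using t unfolding test_fun_iff by (metis times_differentiable.simps(2))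
  ultimately show ?thesis by (simp add: test_fun_iff)
qed

lemma test_fun_deriv_smooth_step: "test_fun (deriv smooth_step)"
proof -
  have "times_differentiable n (deriv smooth_step)" for n
    using times_differentiable_smooth_step[of "Suc n"] by simp
  moreover have "deriv smooth_step x = 0" if "x < 0 \<or> 1 < x" for x
    using that deriv_locally_const[of "{..<0}" x smooth_step 0]
      deriv_locally_const[of "{1<..}" x smooth_step 1]
    by (auto simp: smooth_step_eq_0 smooth_step_eq_1)
  then have "bounded {x. deriv smooth_step x \<noteq> 0}"
    by (rule bounded_if_vanishes_outside_interval)
  ultimately show ?thesis by (simp add: test_fun_iff)
qed

lemma integral_eq_interval_integral_if_vanishes_outside:
  fixes f :: "real \<Rightarrow> 'a::euclidean_space"
  assumes "a \<le> b" "\<And>x. x \<notin> {a..b} \<Longrightarrow> f x = 0"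
  shows "integral\<^sup>L lborel f = (LBINT x=a..b. f x)"
proof -
  have "(LBINT x=a..b. f x) = (LBINT x : {a..b}. f x)" using assms(1) by (rule interval_integral_Icc)
  also have "\<dots> = integral\<^sup>L lborel f"
    unfolding set_lebesgue_integral_def
    by (rule Bochner_Integration.integral_cong) (use assms(2) in \<open>auto simp: indicator_def\<close>)
  finally show ?thesis by simp
qed

lemma interval_integral_deriv_test_fun:
  assumes "test_fun \<psi>"
  shows "(LBINT x=a..b. deriv \<psi> x) = \<psi> b - \<psi> a"
proof (rule interval_integral_FTC_finite)
  show "continuous_on {min a b..max a b} (deriv \<psi>)"
    by (rule test_fun_continuous_on[OF test_fun_deriv[OF assms]])
  show "(\<psi> has_vector_derivative deriv \<psi> x) (at x within {min a b..max a b})" for x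
    using test_fun_has_derivative[OF assms]
    by (simp add: has_real_derivative_iff_has_vector_derivative has_vector_derivative_at_within)
qed

lemma integral_deriv_test_fun: "test_fun \<psi> \<Longrightarrow> integral\<^sup>L lborel (deriv \<psi>) = 0"
proof -
  assume t: "test_fun \<psi>"
  then obtain R where R: "R > 0" "\<And>x. R < \<bar>x\<bar> \<Longrightarrow> \<psi> x = 0" using test_fun_support by blast
  have "integral\<^sup>L lborel (deriv \<psi>) = (LBINT x=-(R+1)..R+1. deriv \<psi> x)"
    by (rule integral_eq_interval_integral_if_vanishes_outside)
       (use R in \<open>auto intro!: deriv_eq_0_outside[of R]\<close>)
  also have "\<dots> = 0"
    using R by (simp add: interval_integral_deriv_test_fun[OF t])
  finally show ?thesis .
qed


section \<open>Locally integrable functions\<close>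

definition locally_integrable :: "(real \<Rightarrow> complex) \<Rightarrow> bool" where
  "locally_integrable f \<longleftrightarrow> f \<in> borel_measurable borel \<and> (\<forall>a b. set_integrable lborel {a..b} f)"

lemma locally_integrable_borel_measurable:
  "locally_integrable f \<Longrightarrow> f \<in> borel_measurable borel"
  by (simp add: locally_integrable_def)

lemma locally_integrable_continuous:
  "continuous_on UNIV f \<Longrightarrow> locally_integrable f"
  unfolding locally_integrable_def
  by (auto intro!: borel_measurable_continuous_onI borel_integrable_atLeastAtMost'
           intro: continuous_on_subset)

lemma locally_integrable_const: "locally_integrable (\<lambda>x. c)"
  by (rule locally_integrable_continuous) simp

lemma locally_integrable_diff:
  "locally_integrable f \<Longrightarrow> locally_integrable g \<Longrightarrow> locally_integrable (\<lambda>x. f x - g x)"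
  unfolding locally_integrable_def set_integrable_def
  by (auto simp: scaleR_diff_right intro!: Bochner_Integration.integrable_diff)

lemma L2_locally_integrable:
  assumes "L2 f" shows "locally_integrable f"
  unfolding locally_integrable_def
proof (intro conjI allI)
  show fm: "f \<in> borel_measurable borel" using assms by (simp add: L2_def)
  fix a b :: real
  have i1: "integrable lborel (\<lambda>x. indicator {a..b} x *\<^sub>R (1::real))"
    using borel_integrable_atLeastAtMost'[of a b "\<lambda>_. 1::real"] by (simp add: set_integrable_def)
  have i2: "integrable lborel (\<lambda>x. indicator {a..b} x *\<^sub>R (norm (f x))\<^sup>2)"
    using assms unfolding L2_def by (intro integrable_mult_indicator) auto
  show "set_integrable lborel {a..b} f"
    unfolding set_integrable_def
  proof (rule Bochner_Integration.integrable_bound[OF Bochner_Integration.integrable_add[OF i1 i2]])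
    show "(\<lambda>x. indicator {a..b} x *\<^sub>R f x) \<in> borel_measurable lborel" using fm by simp
    have "norm (f x) \<le> 1 + (norm (f x))\<^sup>2" for x
    proof -
      have "2 * norm (f x) \<le> (norm (f x))\<^sup>2 + 1"
        using zero_le_power2[of "norm (f x) - 1"] by (simp add: power2_diff)
      then show ?thesis using norm_ge_zero[of "f x"] by linarith
    qed
    then show "AE x in lborel. norm (indicator {a..b} x *\<^sub>R f x)
         \<le> norm (indicator {a..b} x *\<^sub>R 1 + indicator {a..b} x *\<^sub>R (norm (f x))\<^sup>2)"
      by (intro AE_I2) (auto simp: indicator_def)
  qed
qed

lemma locally_integrable_piecewise:
  assumes "continuous_on UNIV fp" "continuous_on UNIV fm"
  shows "locally_integrable (\<lambda>x. if 0 \<le> x then fp x else fm x)"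
  unfolding locally_integrable_def
proof (intro conjI allI)
  have [measurable]: "fp \<in> borel_measurable borel" "fm \<in> borel_measurable borel"
    using assms by (auto intro: borel_measurable_continuous_onI)
  show "(\<lambda>x. if 0 \<le> x then fp x else fm x) \<in> borel_measurable borel" by measurable
  fix a b :: real
  have "integrable lborel (\<lambda>x. norm (indicator {a..b} x *\<^sub>R fp x) + norm (indicator {a..b} x *\<^sub>R fm x))"
    using assms[THEN locally_integrable_continuous]
    by (intro Bochner_Integration.integrable_add integrable_norm)
       (auto simp: locally_integrable_def set_integrable_def)
  then show "set_integrable lborel {a..b} (\<lambda>x. if 0 \<le> x then fp x else fm x)"
    unfolding set_integrable_def
  proof (rule Bochner_Integration.integrable_bound)
    show "(\<lambda>x. indicator {a..b} x *\<^sub>R (if 0 \<le> x then fp x else fm x)) \<in> borel_measurable lborel"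
      by measurable
  qed (intro AE_I2, auto simp: indicator_def)
qed

lemma bounded_if_continuous_vanishes_outside:
  fixes f :: "real \<Rightarrow> real"
  assumes "continuous_on UNIV f" "\<And>x. R < \<bar>x\<bar> \<Longrightarrow> f x = 0"
  obtains M where "\<And>x. \<bar>f x\<bar> \<le> M"
proof -
  have "compact (f ` {-R..R})"
    by (rule compact_continuous_image[OF continuous_on_subset[OF assms(1)]]) auto
  then obtain M where M: "\<And>x. x \<in> {-R..R} \<Longrightarrow> norm (f x) \<le> M"
    using compact_imp_bounded bounded_iff by (metis image_eqI)
  have "\<bar>f x\<bar> \<le> max M 0" for x
  proof (cases "x \<in> {-R..R}")
    case False
    then have "R < \<bar>x\<bar>" by auto
    then show ?thesis using assms(2) by simp
  qed (use M in force)
  then show ?thesis by (rule that)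
qed

lemma integrable_mult_if_vanishes_outside:
  fixes f :: "real \<Rightarrow> complex"
  assumes f: "locally_integrable f" and \<psi>: "continuous_on UNIV \<psi>"
    and R: "\<And>x. R < \<bar>x\<bar> \<Longrightarrow> \<psi> x = 0"
  shows "integrable lborel (\<lambda>x. f x * complex_of_real (\<psi> x))"
proof -
  obtain M where M: "\<And>x. \<bar>\<psi> x\<bar> \<le> M"
    using bounded_if_continuous_vanishes_outside[OF \<psi> R] by blast
  have [measurable]: "\<psi> \<in> borel_measurable borel" "f \<in> borel_measurable borel"
    using borel_measurable_continuous_onI[OF \<psi>] f by (auto simp: locally_integrable_def)
  have "integrable lborel (\<lambda>x. M *\<^sub>R (indicator {-R..R} x *\<^sub>R f x))"
    using f unfolding locally_integrable_def set_integrable_def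
    by (intro integrable_scaleR_right) blast
  then show ?thesis
  proof (rule Bochner_Integration.integrable_bound)
    have "norm (f x * complex_of_real (\<psi> x)) \<le> norm (M *\<^sub>R (indicator {-R..R} x *\<^sub>R f x))" for x
    proof (cases "x \<in> {-R..R}")
      case True
      have "norm (f x) * \<bar>\<psi> x\<bar> \<le> norm (f x) * \<bar>M\<bar>"
        using M[of x] by (intro mult_left_mono) auto
      then show ?thesis using True by (simp add: norm_mult mult.commute)
    next
      case False
      then have "R < \<bar>x\<bar>" by (auto simp: abs_if)
      then show ?thesis using R[of x] by simp
    qed
    then show "AE x in lborel. norm (f x * complex_of_real (\<psi> x))
                 \<le> norm (M *\<^sub>R (indicator {-R..R} x *\<^sub>R f x))" by simp
  qed measurable
qed

lemma integrable_mult_test_fun: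
  "locally_integrable f \<Longrightarrow> test_fun \<psi> \<Longrightarrow> integrable lborel (\<lambda>x. f x * complex_of_real (\<psi> x))"
  by (metis integrable_mult_if_vanishes_outside test_fun_continuous_on test_fun_support)

lemma locally_integrable_interval_integrable:
  assumes "locally_integrable f"
  shows "interval_lebesgue_integrable lborel (ereal a) (ereal b) f"
proof -
  have "set_integrable lborel {min a b..max a b} f"
    using assms by (simp add: locally_integrable_def)
  then have "set_integrable lborel {min a b<..<max a b} f"
    by (rule set_integrable_subset) auto
  then show ?thesis
    by (auto simp: interval_lebesgue_integrable_def min_def max_def split: if_splits)
qed

lemma interval_integral_from_0_split:
  assumes "locally_integrable f" "a \<le> x"
  shows "(LBINT s=0..x. f s) = (LBINT s=0..a. f s) + (LBINT s:{a..x}. f s)"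
proof -
  have "(LBINT s=ereal 0..ereal a. f s) + (LBINT s=ereal a..ereal x. f s) = (LBINT s=ereal 0..ereal x. f s)"
  proof (rule interval_integral_sum)
    show "interval_lebesgue_integrable lborel (min (ereal 0) (min (ereal a) (ereal x)))
            (max (ereal 0) (max (ereal a) (ereal x))) f"
      using locally_integrable_interval_integrable[OF assms(1), of "min 0 (min a x)" "max 0 (max a x)"]
      by simp
  qed
  moreover have "(LBINT s=ereal a..ereal x. f s) = (LBINT s:{a..x}. f s)"
    using assms(2) by (rule interval_integral_Icc)
  ultimately show ?thesis by (simp add: zero_ereal_def)
qed

lemma continuous_on_interval_integral_from_0:
  assumes g: "locally_integrable g"
  shows "continuous_on UNIV (\<lambda>x::real. LBINT s=0..x. g s)"
proof -
  have "isCont (\<lambda>x::real. LBINT s=0..x. g s) x" for x :: real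
  proof -
    define N where "N = \<bar>x\<bar> + 1"
    have si: "set_integrable lborel {-N..N} g" using g by (simp add: locally_integrable_def)
    have "continuous_on {-N..N} (\<lambda>y. integral {-N..y} g)"
      using set_borel_integral_eq_integral(1)[OF si] by (rule indefinite_integral_continuous_1)
    then have c1: "continuous_on {-N..N} (\<lambda>y. (LBINT s=0..-N. g s) + integral {-N..y} g)"
      by (intro continuous_intros)
    have eq: "(LBINT s=0..y. g s) = (LBINT s=0..-N. g s) + integral {-N..y} g" if "y \<in> {-N..N}" for y
    proof -
      have "(LBINT s=0..y. g s) = (LBINT s=0..-N. g s) + (LBINT s:{-N..y}. g s)"
        using that by (intro interval_integral_from_0_split g) auto
      moreover have "set_integrable lborel {-N..y} g" using g by (simp add: locally_integrable_def)
      ultimately show ?thesis using set_borel_integral_eq_integral(2) by metis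
    qed
    have "continuous_on {-N..N} (\<lambda>y::real. LBINT s=0..y. g s)"
      by (rule continuous_on_cong[OF refl eq, THEN iffD2, OF _ c1]) assumption
    moreover have "x \<in> interior {-N..N}" unfolding N_def by auto
    ultimately show ?thesis by (rule continuous_on_interior)
  qed
  then show ?thesis by (simp add: continuous_at_imp_continuous_on)
qed

lemma has_vector_derivative_interval_integral:
  fixes f :: "real \<Rightarrow> 'a::euclidean_space" and c x :: real
  assumes "continuous_on UNIV f"
  shows "((\<lambda>u. LBINT y=c..u. f y) has_vector_derivative f x) (at x)"
proof -
  have "((\<lambda>u. LBINT y=c..u. f y) has_vector_derivative f x) (at x within {min c x - 1..max c x + 1})"
    by (rule interval_integral_FTC2) (auto intro: continuous_on_subset[OF assms])
  moreover have "at x within {min c x - 1..max c x + 1} = at x"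
    by (rule at_within_Icc_at) auto
  ultimately show ?thesis by simp
qed


section \<open>The fundamental lemma of the calculus of variations\<close>

text \<open>The measures with densities \<open>w\<^sup>+\<close> and \<open>w\<^sup>-\<close> agree on all half-lines, hence coincide.\<close>
lemma AE_eq_0_if_integral_greaterThan_eq_0:
  fixes w :: "real \<Rightarrow> real"
  assumes w: "integrable lborel w"
    and z: "\<And>x. integral\<^sup>L lborel (\<lambda>t. indicator {x<..} t * w t) = 0"
  shows "AE t in lborel. w t = 0"
proof -
  have [measurable]: "w \<in> borel_measurable borel" using w by auto
  have positive_part_integrable: "integrable lborel (\<lambda>t. indicator {x<..} t * max (h t) 0)"
    if "integrable lborel h" for h :: "real \<Rightarrow> real" and x
    using integrable_mult_indicator[of "{x<..}" lborel "\<lambda>t. max (h t) 0"] that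
    by (simp add: integrable_max)
  have density_greaterThan: "emeasure (density lborel (\<lambda>t. ennreal (h t))) {x<..}
      = ennreal (integral\<^sup>L lborel (\<lambda>t. indicator {x<..} t * max (h t) 0))"
    if hi: "integrable lborel h" for h :: "real \<Rightarrow> real" and x
  proof -
    have [measurable]: "h \<in> borel_measurable borel" using hi by auto
    have "emeasure (density lborel (\<lambda>t. ennreal (h t))) {x<..}
        = (\<integral>\<^sup>+ t. ennreal (h t) * indicator {x<..} t \<partial>lborel)"
      by (subst emeasure_density) auto
    also have "\<dots> = (\<integral>\<^sup>+ t. ennreal (indicator {x<..} t * max (h t) 0) \<partial>lborel)"
      by (intro nn_integral_cong) (auto simp: indicator_def max_def ennreal_neg)
    also have "\<dots> = ennreal (integral\<^sup>L lborel (\<lambda>t. indicator {x<..} t * max (h t) 0))"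
      by (rule nn_integral_eq_integral[OF positive_part_integrable[OF hi]]) auto
    finally show ?thesis .
  qed
  have "density lborel (\<lambda>t. ennreal (w t)) = density lborel (\<lambda>t. ennreal (- w t))"
  proof (rule measure_eqI_lessThan)
    fix x
    show "emeasure (density lborel (\<lambda>t. ennreal (w t))) {x<..} < \<infinity>"
      using density_greaterThan[OF w] by simp
    have "integral\<^sup>L lborel (\<lambda>t. indicator {x<..} t * max (w t) 0)
          - integral\<^sup>L lborel (\<lambda>t. indicator {x<..} t * max (- w t) 0)
        = integral\<^sup>L lborel (\<lambda>t. indicator {x<..} t * max (w t) 0 - indicator {x<..} t * max (- w t) 0)"
      using w by (intro Bochner_Integration.integral_diff[symmetric] positive_part_integrable integrable_minus)
    also have "\<dots> = integral\<^sup>L lborel (\<lambda>t. indicator {x<..} t * w t)"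
      by (intro Bochner_Integration.integral_cong) (auto simp: max_def algebra_simps)
    finally show "emeasure (density lborel (\<lambda>t. ennreal (w t))) {x<..}
                = emeasure (density lborel (\<lambda>t. ennreal (- w t))) {x<..}"
      unfolding density_greaterThan[OF w] density_greaterThan[OF integrable_minus[OF w]]
      using z[of x] by simp
  qed simp_all
  then have "AE t in lborel. ennreal (w t) = ennreal (- w t)"
    by (intro sigma_finite_measure.density_unique[OF sigma_finite_lborel]) auto
  then show ?thesis
    by eventually_elim (metis ennreal_neg le_cases neg_0_le_iff_le ennreal_eq_0_iff antisym neg_le_0_iff_le)
qed

lemma AE_eq_0_if_integral_greaterThan_eq_0_complex:
  fixes w :: "real \<Rightarrow> complex"
  assumes w: "integrable lborel w"
    and z: "\<And>x. integral\<^sup>L lborel (\<lambda>t. indicator {x<..} t *\<^sub>R w t) = 0"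
  shows "AE t in lborel. w t = 0"
proof -
  have i: "integrable lborel (\<lambda>t. indicator {x<..} t *\<^sub>R w t)" for x
    using w by (intro integrable_mult_indicator) auto
  have "AE t in lborel. Re (w t) = 0"
  proof (rule AE_eq_0_if_integral_greaterThan_eq_0)
    show "integral\<^sup>L lborel (\<lambda>t. indicator {x<..} t * Re (w t)) = 0" for x
      using integral_Re[OF i, of x] z[of x] by simp
  qed (use w in simp)
  moreover have "AE t in lborel. Im (w t) = 0"
  proof (rule AE_eq_0_if_integral_greaterThan_eq_0)
    show "integral\<^sup>L lborel (\<lambda>t. indicator {x<..} t * Im (w t)) = 0" for x
      using integral_Im[OF i, of x] z[of x] by simp
  qed (use w in simp)
  ultimately show ?thesis by eventually_elim (simp add: complex_eq_iff)
qed

definition interval_cutoff :: "real \<Rightarrow> real \<Rightarrow> nat \<Rightarrow> real \<Rightarrow> real" where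
  "interval_cutoff a b m x = smooth_step (real (Suc m) * (x - a)) * smooth_step (real (Suc m) * (b - x))"

lemma interval_cutoff_eq_0: "x \<le> a \<or> b \<le> x \<Longrightarrow> interval_cutoff a b m x = 0"
  by (auto simp: interval_cutoff_def smooth_step_eq_0 mult_nonneg_nonpos mult_nonneg_nonneg)

lemma test_fun_interval_cutoff: "test_fun (interval_cutoff a b m)"
proof -
  have "times_differentiable n (\<lambda>x. smooth_step (real (Suc m) * x + (- real (Suc m) * a))
          * smooth_step ((- real (Suc m)) * x + real (Suc m) * b))" for n
    by (intro times_differentiable_mult times_differentiable_compose_affine times_differentiable_smooth_step)
  then have "times_differentiable n (interval_cutoff a b m)" for n
    unfolding interval_cutoff_def by (simp add: algebra_simps)
  moreover have "bounded {x. interval_cutoff a b m x \<noteq> 0}"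
    by (rule bounded_if_vanishes_outside_interval[where a=a and b=b]) (auto simp: interval_cutoff_eq_0)
  ultimately show ?thesis by (simp add: test_fun_iff)
qed

lemma abs_interval_cutoff_le: "\<bar>interval_cutoff a b m x\<bar> \<le> indicator {a..b} x"
proof (cases "x \<in> {a..b}")
  case True
  then show ?thesis
    by (simp add: interval_cutoff_def abs_mult mult_le_one smooth_step_nonneg smooth_step_le_1)
qed (auto simp: interval_cutoff_eq_0)

lemma interval_cutoff_tendsto: "(\<lambda>m. interval_cutoff a b m x) \<longlonglongrightarrow> indicator {a<..<b} x"
proof (cases "x \<in> {a<..<b}")
  case True
  have ev: "eventually (\<lambda>m. 1 \<le> real (Suc m) * d) sequentially" if "d > 0" for d :: real
  proof -
    obtain k :: nat where k: "1 / d < real k" using reals_Archimedean2 by blast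
    have "1 \<le> real (Suc m) * d" if "k \<le> m" for m
    proof -
      have "1 / d < real (Suc m)" using k that by linarith
      then show ?thesis using \<open>d > 0\<close> by (simp add: field_simps)
    qed
    then show ?thesis unfolding eventually_sequentially by blast
  qed
  then have "eventually (\<lambda>m. interval_cutoff a b m x = 1) sequentially"
    using True eventually_conj[OF ev[of "x - a"] ev[of "b - x"]]
    by (auto elim: eventually_mono simp: interval_cutoff_def smooth_step_eq_1)
  then show ?thesis using True by (simp add: tendsto_eventually)
qed (auto simp: interval_cutoff_eq_0)

text \<open>Dominated convergence with the cutoffs \<open>interval_cutoff a b m \<rightarrow> \<chi>\<^bsub>(a,b)\<^esub>\<close>.\<close>
lemma integral_indicator_eq_0_if_test_integrals_eq_0:
  fixes w :: "real \<Rightarrow> complex"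
  assumes w: "locally_integrable w"
    and z: "\<And>\<theta>. test_fun \<theta> \<Longrightarrow> integral\<^sup>L lborel (\<lambda>x. w x * of_real (\<theta> x)) = 0"
  shows "integral\<^sup>L lborel (\<lambda>x. w x * of_real (indicator {a<..<b} x)) = 0"
proof -
  have [measurable]: "w \<in> borel_measurable borel" "interval_cutoff a b m \<in> borel_measurable borel" for m
    using w test_fun_interval_cutoff
    by (auto simp: locally_integrable_borel_measurable test_fun_borel_measurable)
  have wi: "integrable lborel (\<lambda>x. indicator {a..b} x *\<^sub>R w x)"
    using w by (simp add: locally_integrable_def set_integrable_def)
  have "(\<lambda>m. integral\<^sup>L lborel (\<lambda>x. w x * of_real (interval_cutoff a b m x)))
        \<longlonglongrightarrow> integral\<^sup>L lborel (\<lambda>x. w x * of_real (indicator {a<..<b} x))"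
  proof (rule integral_dominated_convergence[where w="\<lambda>x. norm (indicator {a..b} x *\<^sub>R w x)"])
    show "integrable lborel (\<lambda>x. norm (indicator {a..b} x *\<^sub>R w x))"
      using wi by (rule integrable_norm)
    show "AE x in lborel. (\<lambda>m. w x * of_real (interval_cutoff a b m x))
            \<longlonglongrightarrow> w x * of_real (indicator {a<..<b} x)"
      by (intro AE_I2 tendsto_mult tendsto_const tendsto_of_real interval_cutoff_tendsto)
    have "norm (w x) * \<bar>interval_cutoff a b m x\<bar> \<le> norm (w x) * indicator {a..b} x" for x m
      by (intro mult_left_mono abs_interval_cutoff_le) auto
    then show "AE x in lborel. norm (w x * of_real (interval_cutoff a b m x))
                 \<le> norm (indicator {a..b} x *\<^sub>R w x)" for m
      by (intro AE_I2) (simp add: norm_mult mult.commute)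
  qed measurable
  moreover have "(\<lambda>m. integral\<^sup>L lborel (\<lambda>x. w x * of_real (interval_cutoff a b m x))) = (\<lambda>m. 0)"
    using z test_fun_interval_cutoff by auto
  ultimately show ?thesis using LIMSEQ_unique tendsto_const by metis
qed

lemma AE_eq_0_if_test_integrals_eq_0:
  fixes w :: "real \<Rightarrow> complex"
  assumes w: "locally_integrable w"
    and z: "\<And>\<theta>. test_fun \<theta> \<Longrightarrow> integral\<^sup>L lborel (\<lambda>x. w x * of_real (\<theta> x)) = 0"
  shows "AE x in lborel. w x = 0"
proof -
  have "AE x in lborel. x \<in> {- real N<..<real N} \<longrightarrow> w x = 0" for N :: nat
  proof -
    define wN where "wN = (\<lambda>x. indicator {- real N<..<real N} x *\<^sub>R w x)"
    have "integrable lborel (\<lambda>x. indicator {- real N<..<real N} x *\<^sub>R (indicator {- real N..real N} x *\<^sub>R w x))"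
      by (rule integrable_mult_indicator) (use w in \<open>auto simp: locally_integrable_def set_integrable_def\<close>)
    then have "integrable lborel wN"
      by (rule back_subst[where P="integrable lborel"]) (auto simp: wN_def indicator_def)
    moreover have "integral\<^sup>L lborel (\<lambda>t. indicator {x<..} t *\<^sub>R wN t) = 0" for x
    proof -
      have "(\<lambda>t. indicator {x<..} t *\<^sub>R wN t) = (\<lambda>t. w t * of_real (indicator {max x (- real N)<..<real N} t))"
        by (auto simp: wN_def indicator_def)
      then show ?thesis
        using integral_indicator_eq_0_if_test_integrals_eq_0[OF w z] by simp
    qed
    ultimately have "AE x in lborel. wN x = 0"
      by (rule AE_eq_0_if_integral_greaterThan_eq_0_complex)
    then show ?thesis by eventually_elim (simp add: wN_def indicator_def)
  qed
  then have "AE x in lborel. \<forall>N::nat. x \<in> {- real N<..<real N} \<longrightarrow> w x = 0"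
    by (subst AE_all_countable) blast
  then show ?thesis
  proof eventually_elim
    case (elim x)
    obtain N :: nat where "\<bar>x\<bar> < real N" using reals_Archimedean2 by blast
    then show ?case using elim by (auto simp: abs_less_iff)
  qed
qed

text \<open>As \<open>smooth_step\<close> rises from \<open>0\<close> to \<open>1\<close>, subtracting \<open>(\<integral>\<theta>) smooth_step'\<close> leaves a test function
  of integral zero, whose antiderivative again has compact support.\<close>
lemma test_fun_antiderivative:
  assumes t: "test_fun \<theta>"
  obtains \<Psi> where "test_fun \<Psi>"
    "deriv \<Psi> = (\<lambda>x. \<theta> x - integral\<^sup>L lborel \<theta> * deriv smooth_step x)"
proof -
  obtain R where R: "R > 0" "\<And>x. R < \<bar>x\<bar> \<Longrightarrow> \<theta> x = 0" using test_fun_support[OF t] by blast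
  define I where "I = integral\<^sup>L lborel \<theta>"
  define \<Psi> where "\<Psi> = (\<lambda>x. (LBINT y=-(R+1)..x. \<theta> y) - I * smooth_step x)"
  have d\<Psi>: "(\<Psi> has_real_derivative (\<theta> x - I * deriv smooth_step x)) (at x)" for x
    using has_vector_derivative_interval_integral[OF test_fun_continuous_on[OF t], of "-(R+1)" x]
    unfolding \<Psi>_def has_real_derivative_iff_has_vector_derivative[symmetric]
    by (intro DERIV_diff DERIV_cmult smooth_step_has_derivative)
  have "times_differentiable n (\<lambda>x. \<theta> x + (- I) * deriv smooth_step x)" for n
    using t test_fun_deriv_smooth_step
    by (intro times_differentiable_add times_differentiable_mult times_differentiable_const)
       (auto simp: test_fun_iff)
  then have "times_differentiable n \<Psi>" for n
    using times_differentiable_antiderivative[OF d\<Psi>, of n] times_differentiable_SucD by simp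
  moreover have "\<Psi> x = 0" if "x < - (R + 1) \<or> R + 1 < x" for x
    using that
  proof
    assume x: "x < - (R + 1)"
    have "(LBINT y=-(R+1)..x. \<theta> y) = - (LBINT y=x..-(R+1). \<theta> y)"
      by (rule interval_integral_endpoints_reverse)
    also have "(LBINT y=x..-(R+1). \<theta> y) = (LBINT y=x..-(R+1). 0)"
      by (rule interval_integral_cong) (use x R(2) in \<open>auto simp: einterval_iff min_def max_def\<close>)
    finally show "\<Psi> x = 0"
      using x R(1) by (simp add: \<Psi>_def smooth_step_eq_0)
  next
    assume x: "R + 1 < x"
    have "I = (LBINT y=-(R+1)..x. \<theta> y)"
      unfolding I_def
      by (rule integral_eq_interval_integral_if_vanishes_outside) (use x R in auto)
    then show "\<Psi> x = 0"
      using x R(1) by (simp add: \<Psi>_def smooth_step_eq_1)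
  qed
  then have "bounded {x. \<Psi> x \<noteq> 0}"
    by (rule bounded_if_vanishes_outside_interval)
  moreover have "deriv \<Psi> = (\<lambda>x. \<theta> x - I * deriv smooth_step x)"
    by (rule deriv_eqI) (rule d\<Psi>)
  ultimately show ?thesis by (intro that) (auto simp: test_fun_iff I_def)
qed

lemma AE_eq_const_if_deriv_test_integrals_eq_0:
  fixes v :: "real \<Rightarrow> complex"
  assumes v: "locally_integrable v"
    and z: "\<And>\<psi>. test_fun \<psi> \<Longrightarrow> integral\<^sup>L lborel (\<lambda>x. v x * of_real (deriv \<psi> x)) = 0"
  obtains C where "AE x in lborel. v x = C"
proof -
  define C where "C = integral\<^sup>L lborel (\<lambda>x. v x * of_real (deriv smooth_step x))"
  have "AE x in lborel. v x - C = 0"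
  proof (rule AE_eq_0_if_test_integrals_eq_0)
    show "locally_integrable (\<lambda>x. v x - C)"
      by (intro locally_integrable_diff v locally_integrable_const)
    fix \<theta> assume t: "test_fun \<theta>"
    define I where "I = integral\<^sup>L lborel \<theta>"
    obtain \<Psi> where \<Psi>: "test_fun \<Psi>" "deriv \<Psi> = (\<lambda>x. \<theta> x - I * deriv smooth_step x)"
      using test_fun_antiderivative[OF t] unfolding I_def by blast
    have i1: "integrable lborel (\<lambda>x. v x * of_real (\<theta> x))"
      by (rule integrable_mult_test_fun[OF v t])
    have i2: "integrable lborel (\<lambda>x. v x * of_real (deriv smooth_step x))"
      by (rule integrable_mult_test_fun[OF v test_fun_deriv_smooth_step])
    have i3: "integrable lborel (\<lambda>x. C * of_real (\<theta> x))"
      by (rule integrable_mult_test_fun[OF locally_integrable_const t])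
    have "0 = integral\<^sup>L lborel (\<lambda>x. v x * of_real (deriv \<Psi> x))" using z[OF \<Psi>(1)] by simp
    also have "\<dots> = integral\<^sup>L lborel (\<lambda>x. v x * of_real (\<theta> x) - of_real I * (v x * of_real (deriv smooth_step x)))"
      unfolding \<Psi>(2) by (intro Bochner_Integration.integral_cong) (auto simp: algebra_simps)
    also have "\<dots> = integral\<^sup>L lborel (\<lambda>x. v x * of_real (\<theta> x)) - integral\<^sup>L lborel (\<lambda>x. C * of_real (\<theta> x))"
      using i1 i2 by (simp add: C_def I_def mult.commute)
    also have "\<dots> = integral\<^sup>L lborel (\<lambda>x. (v x - C) * of_real (\<theta> x))"
      using i1 i3 by (simp add: algebra_simps)
    finally show "integral\<^sup>L lborel (\<lambda>x. (v x - C) * of_real (\<theta> x)) = 0" by simp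
  qed
  then show ?thesis by (intro that[of C]) auto
qed


section \<open>Weak derivatives\<close>

lemma integrable_lower_triangle:
  fixes f :: "real \<Rightarrow> complex" and g :: "real \<Rightarrow> real"
  assumes f: "locally_integrable f" and g: "g \<in> borel_measurable borel" and M: "\<And>x. \<bar>g x\<bar> \<le> M"
  shows "integrable (lborel \<Otimes>\<^sub>M lborel)
           (\<lambda>(s, x). if a \<le> s \<and> s \<le> x \<and> x \<le> b then f s * of_real (g x) else 0)"
proof -
  have [measurable]: "f \<in> borel_measurable borel" "g \<in> borel_measurable borel"
    using f g by (simp_all add: locally_integrable_borel_measurable)
  define G where "G = (\<lambda>(s::real, x::real). (indicator {a..b} s * norm (f s)) * (M * indicator {a..b} x))"
  have fi: "integrable lborel (\<lambda>s. indicator {a..b} s * norm (f s))"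
    using integrable_norm[of lborel "\<lambda>s. indicator {a..b} s *\<^sub>R f s"] f
    by (simp add: locally_integrable_def set_integrable_def)
  have gi: "integrable lborel (\<lambda>x. M * indicator {a..b} x :: real)"
    by (intro integrable_mult_right integrable_real_indicator) (auto simp: emeasure_lborel_Icc_eq)
  have "integrable (lborel \<Otimes>\<^sub>M lborel) G"
  proof (rule lborel_pair.Fubini_integrable)
    show "G \<in> borel_measurable (lborel \<Otimes>\<^sub>M lborel)" unfolding G_def by measurable
    have "(\<integral>x. norm (G (s, x)) \<partial>lborel)
          = (indicator {a..b} s * norm (f s)) * (\<integral>x. norm (M * indicator {a..b} x) \<partial>lborel)" for s
      by (simp add: G_def abs_mult indicator_def)
    then show "integrable lborel (\<lambda>s. \<integral>x. norm (G (s, x)) \<partial>lborel)"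
      using fi by (simp add: integrable_mult_left)
    show "AE s in lborel. integrable lborel (\<lambda>x. G (s, x))"
      unfolding G_def using gi by (auto intro!: integrable_mult_right)
  qed
  then show ?thesis
  proof (rule Bochner_Integration.integrable_bound)
    have "0 \<le> M" using M[of 0] by linarith
    then have "norm (f s * of_real (g x)) \<le> norm (f s) * M" for s x
      using M[of x] by (simp add: norm_mult mult_left_mono)
    then show "AE p in lborel \<Otimes>\<^sub>M lborel.
        norm ((\<lambda>(s, x). if a \<le> s \<and> s \<le> x \<and> x \<le> b then f s * of_real (g x) else 0) p) \<le> norm (G p)"
      using \<open>0 \<le> M\<close> by (intro AE_I2) (auto simp: G_def abs_mult)
  qed measurable
qed

text \<open>Integration by parts against the antiderivative \<open>\<integral>\<^sub>0\<^sup>x f\<close>; the double integral over the triangle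
  \<open>-S \<le> s \<le> x \<le> S\<close> is evaluated in both orders.\<close>
lemma integral_interval_integral_mult_deriv:
  fixes f :: "real \<Rightarrow> complex"
  assumes f: "locally_integrable f" and t: "test_fun \<psi>"
  shows "integral\<^sup>L lborel (\<lambda>x. (LBINT s=0..x. f s) * of_real (deriv \<psi> x))
       = - integral\<^sup>L lborel (\<lambda>x. f x * of_real (\<psi> x))"
proof -
  obtain R where R: "R > 0" "\<And>x. R < \<bar>x\<bar> \<Longrightarrow> \<psi> x = 0" using test_fun_support[OF t] by blast
  define S where "S = R + 1"
  have \<psi>0: "\<psi> x = 0" and d\<psi>0: "deriv \<psi> x = 0" if "S \<le> \<bar>x\<bar>" for x
    using that R deriv_eq_0_outside[of R \<psi> x] by (auto simp: S_def)
  have d\<psi>_cont: "continuous_on UNIV (deriv \<psi>)"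
    by (rule test_fun_continuous_on[OF test_fun_deriv[OF t]])
  have [measurable]: "f \<in> borel_measurable borel" "deriv \<psi> \<in> borel_measurable borel"
    using f test_fun_borel_measurable[OF test_fun_deriv[OF t]]
    by (simp_all add: locally_integrable_borel_measurable)
  obtain M where M: "\<And>x. \<bar>deriv \<psi> x\<bar> \<le> M"
    using bounded_if_continuous_vanishes_outside[OF d\<psi>_cont, of S] d\<psi>0 by force
  define H where "H = (\<lambda>s x. if -S \<le> s \<and> s \<le> x \<and> x \<le> S then f s * of_real (deriv \<psi> x) else 0)"
  have Hi: "integrable (lborel \<Otimes>\<^sub>M lborel) (case_prod H)"
    unfolding H_def using integrable_lower_triangle[OF f _ M] by simp
  have split: "(LBINT s=0..x. f s) * of_real (deriv \<psi> x)
      = (LBINT s=0..-S. f s) * of_real (deriv \<psi> x) + (\<integral>s. H s x \<partial>lborel)" for x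
  proof (cases "x \<in> {-S..S}")
    case True
    have "(\<integral>s. H s x \<partial>lborel) = (LBINT s:{-S..x}. f s) * of_real (deriv \<psi> x)"
      unfolding set_lebesgue_integral_def
      by (subst integral_mult_left_zero[symmetric])
         (rule Bochner_Integration.integral_cong, use True in \<open>auto simp: H_def indicator_def\<close>)
    then show ?thesis
      using True interval_integral_from_0_split[OF f, of "-S" x] by (simp add: algebra_simps)
  next
    case False
    then have "S \<le> \<bar>x\<bar>" "\<And>s. H s x = 0" by (auto simp: H_def)
    then show ?thesis by (simp add: d\<psi>0)
  qed
  have inner: "(\<integral>x. H s x \<partial>lborel) = - (f s * of_real (\<psi> s))" for s
  proof (cases "s \<in> {-S..S}")
    case True
    have "(\<integral>x. H s x \<partial>lborel) = f s * of_real (\<integral>x. indicator {s..S} x * deriv \<psi> x \<partial>lborel)"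
      by (subst integral_complex_of_real[symmetric], subst integral_mult_right_zero[symmetric])
         (rule Bochner_Integration.integral_cong, use True in \<open>auto simp: H_def indicator_def\<close>)
    also have "(\<integral>x. indicator {s..S} x * deriv \<psi> x \<partial>lborel) = \<psi> S - \<psi> s"
      using True interval_integral_deriv_test_fun[OF t, of s S]
      by (simp add: interval_integral_Icc set_lebesgue_integral_def)
    finally show ?thesis using \<psi>0[of S] R(1) by (simp add: S_def)
  next
    case False
    then have "S \<le> \<bar>s\<bar>" "\<And>x. H s x = 0" by (auto simp: H_def)
    then show ?thesis by (simp add: \<psi>0)
  qed
  have i1: "integrable lborel (\<lambda>x. (LBINT s=0..-S. f s) * of_real (deriv \<psi> x))"
    by (rule integrable_mult_test_fun[OF locally_integrable_const test_fun_deriv[OF t]])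
  have "integral\<^sup>L lborel (\<lambda>x. (LBINT s=0..x. f s) * of_real (deriv \<psi> x))
      = integral\<^sup>L lborel (\<lambda>x. (LBINT s=0..-S. f s) * of_real (deriv \<psi> x)) + (\<integral>x. \<integral>s. H s x \<partial>lborel \<partial>lborel)"
    unfolding split by (rule Bochner_Integration.integral_add[OF i1 lborel_pair.integrable_snd[OF Hi]])
  also have "integral\<^sup>L lborel (\<lambda>x. (LBINT s=0..-S. f s) * of_real (deriv \<psi> x)) = 0"
    using integral_deriv_test_fun[OF t] by simp
  also have "(\<integral>x. \<integral>s. H s x \<partial>lborel \<partial>lborel) = (\<integral>s. \<integral>x. H s x \<partial>lborel \<partial>lborel)"
    using Hi by (rule lborel_pair.Fubini_integral)
  finally show ?thesis by (simp add: inner)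
qed

lemma weak_deriv_imp_AE_eq_interval_integral:
  fixes f g :: "real \<Rightarrow> complex"
  assumes f: "locally_integrable f" and g: "locally_integrable g"
    and fg: "\<And>\<psi>. test_fun \<psi> \<Longrightarrow> integral\<^sup>L lborel (\<lambda>x. f x * of_real (deriv \<psi> x))
                                  = - integral\<^sup>L lborel (\<lambda>x. g x * of_real (\<psi> x))"
  obtains C where "AE x in lborel. f x = (LBINT s=0..x. g s) + C"
proof -
  define G where "G = (\<lambda>x::real. LBINT s=0..x. g s)"
  have G: "locally_integrable G"
    unfolding G_def by (rule locally_integrable_continuous[OF continuous_on_interval_integral_from_0[OF g]])
  obtain C where "AE x in lborel. f x - G x = C"
  proof (rule AE_eq_const_if_deriv_test_integrals_eq_0)
    show "locally_integrable (\<lambda>x. f x - G x)" by (rule locally_integrable_diff[OF f G])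
    fix \<psi> assume t: "test_fun \<psi>"
    have "integral\<^sup>L lborel (\<lambda>x. (f x - G x) * of_real (deriv \<psi> x))
        = integral\<^sup>L lborel (\<lambda>x. f x * of_real (deriv \<psi> x)) - integral\<^sup>L lborel (\<lambda>x. G x * of_real (deriv \<psi> x))"
      using integrable_mult_test_fun[OF f test_fun_deriv[OF t]] integrable_mult_test_fun[OF G test_fun_deriv[OF t]]
      by (simp add: algebra_simps)
    then show "integral\<^sup>L lborel (\<lambda>x. (f x - G x) * of_real (deriv \<psi> x)) = 0"
      using fg[OF t] integral_interval_integral_mult_deriv[OF g t] by (simp add: G_def)
  qed
  then show ?thesis by (intro that[of C]) (auto simp: G_def algebra_simps)
qed

text \<open>Testing the equation with \<open>\<psi>\<close> and the definition of \<open>g = \<phi>'\<close> with \<open>\<psi>'\<close> shows that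
  \<open>g' = -(\<mu> - V + \<Gamma>|\<phi>|\<^sup>2)\<phi>\<close> weakly.\<close>
lemma weak_solution_weak_deriv:
  assumes sol: "weak_solution \<mu> V \<Gamma> \<phi>" and g: "weak_deriv \<phi> g" and t: "test_fun \<psi>"
  shows "integral\<^sup>L lborel (\<lambda>x. g x * of_real (deriv \<psi> x))
       = integral\<^sup>L lborel (\<lambda>x. of_real (\<mu> - V x + \<Gamma> x * (norm (\<phi> x))\<^sup>2) * \<phi> x * of_real (\<psi> x))"
proof -
  let ?u = "\<lambda>x. \<phi> x * of_real (deriv (deriv \<psi> ) x)"
  let ?N = "\<lambda>x. of_real (\<mu> - V x + \<Gamma> x * (norm (\<phi> x))\<^sup>2) * \<phi> x * of_real (\<psi> x)"
  have sum: "integrable lborel (\<lambda>x. ?u x + ?N x)" "integral\<^sup>L lborel (\<lambda>x. ?u x + ?N x) = 0"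
    using sol t unfolding weak_solution_def by blast+
  have u: "integrable lborel ?u"
    "integral\<^sup>L lborel ?u = - integral\<^sup>L lborel (\<lambda>x. g x * of_real (deriv \<psi> x))"
    using g test_fun_deriv[OF t] unfolding weak_deriv_def by blast+
  have "integrable lborel (\<lambda>x. (?u x + ?N x) - ?u x)"
    using sum(1) u(1) by (rule Bochner_Integration.integrable_diff)
  then have "integrable lborel ?N" by simp
  then show ?thesis
    using sum(2) u by (simp add: Bochner_Integration.integral_add[OF u(1)])
qed


section \<open>Energy and uniqueness on a half-line\<close>

definition nls_rhs :: "real \<Rightarrow> real \<Rightarrow> (real \<Rightarrow> complex) \<Rightarrow> real \<Rightarrow> complex" where
  "nls_rhs k G u x = - (complex_of_real (k + G * (norm (u x))\<^sup>2) * u x)"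

text \<open>In \<open>half_line_solution k G u p\<close>, \<open>p\<close> plays the role of \<open>u'\<close>; only \<open>[0, \<infinity>)\<close> is constrained,
  the left half-line is treated through the reflection \<open>x \<mapsto> -x\<close>.\<close>
definition half_line_solution :: "real \<Rightarrow> real \<Rightarrow> (real \<Rightarrow> complex) \<Rightarrow> (real \<Rightarrow> complex) \<Rightarrow> bool" where
  "half_line_solution k G u p \<longleftrightarrow> (\<forall>x\<ge>0. (u has_vector_derivative p x) (at x)
                                       \<and> (p has_vector_derivative nls_rhs k G u x) (at x))"

definition nls_energy :: "real \<Rightarrow> real \<Rightarrow> complex \<Rightarrow> complex \<Rightarrow> real" where
  "nls_energy k G u p = (norm p)\<^sup>2 + k * (norm u)\<^sup>2 + G / 2 * ((norm u)\<^sup>2)\<^sup>2"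

lemma has_real_derivative_norm_power2:
  fixes y :: "real \<Rightarrow> complex"
  assumes "(y has_vector_derivative y') (at x)"
  shows "((\<lambda>x. (norm (y x))\<^sup>2) has_real_derivative 2 * Re (cnj (y x) * y')) (at x)"
proof -
  have "((\<lambda>x. cnj (y x) * y x) has_vector_derivative (cnj (y x) * y' + cnj y' * y x)) (at x)"
    using assms by (intro has_vector_derivative_mult has_vector_derivative_cnj) auto
  then have "((\<lambda>x. Re (cnj (y x) * y x)) has_vector_derivative Re (cnj (y x) * y' + cnj y' * y x)) (at x)"
    by (rule bounded_linear.has_vector_derivative[OF bounded_linear_Re])
  moreover have "(\<lambda>x. Re (cnj (y x) * y x)) = (\<lambda>x. (norm (y x))\<^sup>2)"
    by (auto simp: complex_mult_cnj cmod_power2 mult.commute[of "cnj _"])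
  ultimately show ?thesis
    by (simp add: has_real_derivative_iff_has_vector_derivative mult.commute)
qed

lemma nls_energy_has_derivative_0:
  assumes du: "(u has_vector_derivative p x) (at x)"
    and dp: "(p has_vector_derivative nls_rhs k G u x) (at x)"
  shows "((\<lambda>x. nls_energy k G (u x) (p x)) has_real_derivative 0) (at x)"
proof -
  have n1: "((\<lambda>x. (norm (p x))\<^sup>2) has_real_derivative 2 * Re (cnj (p x) * nls_rhs k G u x)) (at x)"
    by (rule has_real_derivative_norm_power2[OF dp])
  have n2: "((\<lambda>x. (norm (u x))\<^sup>2) has_real_derivative 2 * Re (cnj (u x) * p x)) (at x)"
    by (rule has_real_derivative_norm_power2[OF du])
  have n3: "((\<lambda>x. ((norm (u x))\<^sup>2)\<^sup>2) has_real_derivative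
      2 * (norm (u x))\<^sup>2 * (2 * Re (cnj (u x) * p x))) (at x)"
    using DERIV_power[OF n2, of 2] by (simp add: algebra_simps)
  have "((\<lambda>x. nls_energy k G (u x) (p x)) has_real_derivative
      2 * Re (cnj (p x) * nls_rhs k G u x) + k * (2 * Re (cnj (u x) * p x))
      + G / 2 * (2 * (norm (u x))\<^sup>2 * (2 * Re (cnj (u x) * p x)))) (at x)"
    unfolding nls_energy_def by (intro DERIV_add DERIV_cmult n1 n2 n3)
  moreover have "2 * Re (cnj (p x) * nls_rhs k G u x) + k * (2 * Re (cnj (u x) * p x))
      + G / 2 * (2 * (norm (u x))\<^sup>2 * (2 * Re (cnj (u x) * p x))) = 0"
    by (simp add: nls_rhs_def algebra_simps)
  ultimately show ?thesis by simp
qed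

lemma abs_nls_energy_le:
  assumes "(norm u)\<^sup>2 \<le> 1"
  shows "\<bar>nls_energy k G u p\<bar> \<le> (1 + \<bar>k\<bar> + \<bar>G\<bar>) * ((norm u)\<^sup>2 + (norm p)\<^sup>2)"
proof -
  define N where "N = (norm u)\<^sup>2"
  define P where "P = (norm p)\<^sup>2"
  have N: "0 \<le> N" "N \<le> 1" and P: "0 \<le> P" using assms by (simp_all add: N_def P_def)
  then have "N\<^sup>2 \<le> N" by (simp add: power2_eq_square mult_left_le)
  then have "\<bar>G\<bar> * N\<^sup>2 \<le> \<bar>G\<bar> * N" by (rule mult_left_mono) simp
  then have "\<bar>G\<bar> / 2 * N\<^sup>2 \<le> \<bar>G\<bar> * N"
    using zero_le_power2[of N] abs_ge_zero[of G] mult_nonneg_nonneg[of "\<bar>G\<bar>" "N\<^sup>2"] by linarith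
  moreover have "\<bar>P + k * N + G / 2 * N\<^sup>2\<bar> \<le> \<bar>P\<bar> + \<bar>k * N\<bar> + \<bar>G / 2 * N\<^sup>2\<bar>"
    by (smt (verit))
  moreover have "\<bar>P\<bar> + \<bar>k * N\<bar> + \<bar>G / 2 * N\<^sup>2\<bar> = P + \<bar>k\<bar> * N + \<bar>G\<bar> / 2 * N\<^sup>2"
    using N P by (simp add: abs_mult)
  moreover have "P + \<bar>k\<bar> * N + \<bar>G\<bar> * N \<le> (1 + \<bar>k\<bar> + \<bar>G\<bar>) * (N + P)"
    using N P by (simp add: algebra_simps)
  ultimately show ?thesis unfolding nls_energy_def N_def[symmetric] P_def[symmetric] by linarith
qed

lemma exists_less_if_integrable_nonneg:
  fixes h :: "real \<Rightarrow> real"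
  assumes hi: "integrable lborel h" and h0: "\<And>x. h x \<ge> 0" and e: "\<epsilon> > 0"
  obtains x where "x \<ge> X" "h x < \<epsilon>"
proof (rule ccontr)
  assume "\<not> thesis"
  then have big: "\<And>x. x \<ge> X \<Longrightarrow> \<epsilon> \<le> h x" using that by force
  obtain n :: nat where n: "integral\<^sup>L lborel h / \<epsilon> < real n" using reals_Archimedean2 by blast
  have "\<epsilon> * real n = integral\<^sup>L lborel (\<lambda>x. \<epsilon> * indicator {X..X + real n} x)"
    by simp
  also have "\<dots> \<le> integral\<^sup>L lborel h"
  proof (rule integral_mono[OF _ hi])
    show "integrable lborel (\<lambda>x. \<epsilon> * indicat_real {X..X + real n} x)"
      by (intro integrable_mult_right integrable_real_indicator) auto
    show "\<epsilon> * indicat_real {X..X + real n} x \<le> h x" for x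
      using big[of x] h0[of x] by (auto simp: indicator_def)
  qed
  finally show False using n e by (simp add: field_simps)
qed

text \<open>The energy is conserved along the half-line and becomes arbitrarily small there, because
  \<open>|u|\<^sup>2 + |u'|\<^sup>2\<close> is integrable.\<close>
lemma half_line_solution_energy_eq_0:
  assumes sol: "half_line_solution k G u p"
    and int: "integrable lborel (\<lambda>x. indicator {0..} x * ((norm (u x))\<^sup>2 + (norm (p x))\<^sup>2))"
  shows "nls_energy k G (u 0) (p 0) = 0"
proof -
  define E where "E = (\<lambda>x. nls_energy k G (u x) (p x))"
  define K where "K = 1 + \<bar>k\<bar> + \<bar>G\<bar>"
  have K: "K > 0" by (simp add: K_def add_pos_nonneg)
  have dE: "(E has_real_derivative 0) (at x)" if "0 \<le> x" for x
    using sol that unfolding half_line_solution_def E_def by (blast intro: nls_energy_has_derivative_0)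
  have "\<exists>c. \<forall>x\<in>{0..}. E x = c"
    by (rule has_field_derivative_zero_constant) (auto intro: has_field_derivative_at_within dE)
  then have E_const: "E x = E 0" if "0 \<le> x" for x using that by force
  have "\<bar>E 0\<bar> \<le> 0 + e" if e: "e > 0" for e
  proof -
    define \<epsilon> where "\<epsilon> = min 1 (e / K)"
    have \<epsilon>: "0 < \<epsilon>" "\<epsilon> \<le> 1" using e K by (simp_all add: \<epsilon>_def)
    have "K * \<epsilon> \<le> K * (e / K)" using K by (intro mult_left_mono) (simp_all add: \<epsilon>_def)
    then have K\<epsilon>: "K * \<epsilon> \<le> e" using K by simp
    have h0: "0 \<le> indicator {0..} x * ((norm (u x))\<^sup>2 + (norm (p x))\<^sup>2)" for x
      by simp
    obtain x where x: "x \<ge> 0" "indicator {0..} x * ((norm (u x))\<^sup>2 + (norm (p x))\<^sup>2) < \<epsilon>"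
      using exists_less_if_integrable_nonneg[OF int h0 \<epsilon>(1), of 0] by blast
    then have small: "(norm (u x))\<^sup>2 + (norm (p x))\<^sup>2 < \<epsilon>" by simp
    have "\<bar>E 0\<bar> = \<bar>E x\<bar>" using E_const[OF x(1)] by simp
    also have "\<dots> \<le> K * ((norm (u x))\<^sup>2 + (norm (p x))\<^sup>2)"
      unfolding E_def K_def using small \<epsilon>(2) zero_le_power2[of "norm (p x)"]
      by (intro abs_nls_energy_le) linarith
    also have "\<dots> \<le> K * \<epsilon>" using small K by simp
    finally show ?thesis using K\<epsilon> by simp
  qed
  then have "\<bar>E 0\<bar> \<le> 0" by (rule field_le_epsilon)
  then show ?thesis by (simp add: E_def)
qed

lemma Re_cnj_mult_le: "Re (cnj u * v) \<le> norm u * norm v"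
  using complex_Re_le_cmod[of "cnj u * v"] by (simp add: norm_mult)

lemma Re_energy_derivative_le:
  fixes y z w :: complex
  assumes w: "norm w \<le> K * norm y" and K: "0 \<le> K"
  shows "2 * Re (cnj y * z) + 2 * Re (cnj z * w) \<le> (1 + K) * ((norm y)\<^sup>2 + (norm z)\<^sup>2)"
proof -
  have two_mult_le: "2 * (s * t) \<le> s\<^sup>2 + t\<^sup>2" for s t :: real
    using zero_le_power2[of "s - t"] by (simp add: power2_diff algebra_simps)
  have "2 * Re (cnj z * w) \<le> 2 * (norm z * (K * norm y))"
    using Re_cnj_mult_le[of z w] mult_left_mono[OF w norm_ge_zero[of z]] by linarith
  also have "\<dots> = K * (2 * (norm y * norm z))" by (simp add: algebra_simps)
  also have "\<dots> \<le> K * ((norm y)\<^sup>2 + (norm z)\<^sup>2)"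
    using K by (intro mult_left_mono two_mult_le)
  finally show ?thesis
    using Re_cnj_mult_le[of y z] two_mult_le[of "norm y" "norm z"] by (simp add: algebra_simps)
qed

text \<open>Gronwall's argument: \<open>e\<^sup>-\<^sup>(\<^sup>1\<^sup>+\<^sup>K\<^sup>)\<^sup>x (|y|\<^sup>2 + |z|\<^sup>2)\<close> is nonincreasing and vanishes at \<open>0\<close>.\<close>
lemma second_order_ode_zero_if_zero_initial:
  fixes y z w :: "real \<Rightarrow> complex" and K T :: real
  assumes dy: "\<And>x. 0 \<le> x \<Longrightarrow> x \<le> T \<Longrightarrow> (y has_vector_derivative z x) (at x)"
    and dz: "\<And>x. 0 \<le> x \<Longrightarrow> x \<le> T \<Longrightarrow> (z has_vector_derivative w x) (at x)"
    and w: "\<And>x. 0 \<le> x \<Longrightarrow> x \<le> T \<Longrightarrow> norm (w x) \<le> K * norm (y x)" and K: "0 \<le> K"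
    and y0: "y 0 = 0" and z0: "z 0 = 0" and T: "0 \<le> T"
  shows "y T = 0"
proof -
  define C where "C = 1 + K"
  define Q where "Q = (\<lambda>x. (norm (y x))\<^sup>2 + (norm (z x))\<^sup>2)"
  define Q' where "Q' = (\<lambda>x. 2 * Re (cnj (y x) * z x) + 2 * Re (cnj (z x) * w x))"
  have dR: "((\<lambda>x. exp (- C * x) * Q x) has_real_derivative exp (- C * x) * (Q' x - C * Q x)) (at x)"
    if "0 \<le> x" "x \<le> T" for x
  proof -
    have dQ: "(Q has_real_derivative Q' x) (at x)"
      unfolding Q_def Q'_def by (intro DERIV_add has_real_derivative_norm_power2 dy dz that)
    have "((\<lambda>x. exp (- C * x)) has_real_derivative exp (- C * x) * (- C)) (at x)"
      by (auto intro!: derivative_eq_intros)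
    from DERIV_mult[OF this dQ] show ?thesis by (simp add: algebra_simps)
  qed
  have "exp (- C * T) * Q T \<le> exp (- C * 0) * Q 0"
  proof (rule DERIV_nonpos_imp_nonincreasing[OF T])
    fix x assume x: "0 \<le> x" "x \<le> T"
    have "Q' x \<le> C * Q x"
      unfolding Q'_def Q_def C_def using w[OF x] K by (rule Re_energy_derivative_le)
    then have "exp (- C * x) * (Q' x - C * Q x) \<le> 0"
      by (intro mult_nonneg_nonpos) auto
    then show "\<exists>d. ((\<lambda>x. exp (- C * x) * Q x) has_real_derivative d) (at x) \<and> d \<le> 0"
      using dR x by blast
  qed
  then have "Q T \<le> 0" by (simp add: Q_def y0 z0 mult_le_0_iff)
  then have "(norm (y T))\<^sup>2 \<le> 0" unfolding Q_def using zero_le_power2[of "norm (z T)"] by linarith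
  then show ?thesis by simp
qed

lemma half_line_solution_eq_0:
  assumes sol: "half_line_solution k G u p" and "u 0 = 0" "p 0 = 0" and T: "0 \<le> T"
  shows "u T = 0"
proof -
  have "continuous_on {0..T} u"
    using sol unfolding half_line_solution_def
    by (intro continuous_at_imp_continuous_on ballI has_vector_derivative_continuous) auto
  then have "compact (u ` {0..T})" by (rule compact_continuous_image) auto
  then obtain B where B: "\<And>x. x \<in> {0..T} \<Longrightarrow> norm (u x) \<le> B"
    using compact_imp_bounded bounded_iff by (metis image_eqI)
  show ?thesis
  proof (rule second_order_ode_zero_if_zero_initial[where z=p and w="nls_rhs k G u"
        and K="\<bar>k\<bar> + \<bar>G\<bar> * B\<^sup>2"])
    fix x assume x: "0 \<le> x" "x \<le> T"
    have "(norm (u x))\<^sup>2 \<le> B\<^sup>2" using B x by (intro power_mono) auto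
    then have "\<bar>G\<bar> * (norm (u x))\<^sup>2 \<le> \<bar>G\<bar> * B\<^sup>2" by (simp add: mult_left_mono)
    moreover have "\<bar>k + G * (norm (u x))\<^sup>2\<bar> \<le> \<bar>k\<bar> + \<bar>G\<bar> * (norm (u x))\<^sup>2"
      by (metis abs_mult abs_power2 abs_triangle_ineq power2_abs)
    ultimately have "\<bar>k + G * (norm (u x))\<^sup>2\<bar> \<le> \<bar>k\<bar> + \<bar>G\<bar> * B\<^sup>2" by linarith
    moreover have "norm (nls_rhs k G u x) = \<bar>k + G * (norm (u x))\<^sup>2\<bar> * norm (u x)"
      by (simp only: nls_rhs_def norm_minus_cancel norm_mult norm_of_real)
    ultimately show "norm (nls_rhs k G u x) \<le> (\<bar>k\<bar> + \<bar>G\<bar> * B\<^sup>2) * norm (u x)"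
      by (simp add: mult_right_mono)
  qed (use sol assms(2,3) T in \<open>simp_all add: half_line_solution_def\<close>)
qed

lemma half_line_solution_reflect:
  assumes du: "\<And>x. x \<le> 0 \<Longrightarrow> (u has_vector_derivative p x) (at x)"
    and dp: "\<And>x. x \<le> 0 \<Longrightarrow> (p has_vector_derivative nls_rhs k G u x) (at x)"
  shows "half_line_solution k G (\<lambda>x. u (- x)) (\<lambda>x. - p (- x))"
  unfolding half_line_solution_def
proof (intro allI impI conjI)
  fix x :: real assume "0 \<le> x"
  have neg: "(uminus has_vector_derivative -1) (at x)"
    by (auto intro!: derivative_eq_intros)
  have "((u \<circ> uminus) has_vector_derivative (-1) *\<^sub>R p (- x)) (at x)"
    by (rule vector_diff_chain_at[OF neg]) (use du \<open>0 \<le> x\<close> in simp)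
  then show "((\<lambda>x. u (- x)) has_vector_derivative - p (- x)) (at x)" by (simp add: o_def)
  have "((p \<circ> uminus) has_vector_derivative (-1) *\<^sub>R nls_rhs k G u (- x)) (at x)"
    by (rule vector_diff_chain_at[OF neg]) (use dp \<open>0 \<le> x\<close> in simp)
  then show "((\<lambda>x. - p (- x)) has_vector_derivative nls_rhs k G (\<lambda>x. u (- x)) x) (at x)"
    by (auto dest: has_vector_derivative_minus simp: o_def nls_rhs_def)
qed


section \<open>Regularity of weak solutions\<close>

lemma continuous_on_nls_rhs: "continuous_on UNIV u \<Longrightarrow> continuous_on UNIV (nls_rhs k G u)"
  unfolding nls_rhs_def by (intro continuous_intros)

lemma has_vector_derivative_interval_integral_plus:
  fixes f :: "real \<Rightarrow> complex"
  assumes "continuous_on UNIV f"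
  shows "((\<lambda>x. (LBINT s=0..x. f s) + D) has_vector_derivative f x) (at x)"
  using has_vector_derivative_add[OF has_vector_derivative_interval_integral[OF assms, of 0 x]
                                     has_vector_derivative_const[of D]]
  by (simp add: zero_ereal_def)

lemma has_vector_derivative_interval_integral_AE:
  fixes g p :: "real \<Rightarrow> complex"
  assumes AE: "AE x in lborel. g x = p x" and p: "continuous_on UNIV p"
    and [measurable]: "g \<in> borel_measurable borel"
  shows "((\<lambda>x. (LBINT s=0..x. g s) + C) has_vector_derivative p x) (at x)"
proof -
  have [measurable]: "p \<in> borel_measurable borel" by (rule borel_measurable_continuous_onI[OF p])
  have "(LBINT s=0..x. g s) = (LBINT s=0..x. p s)" for x :: real
  proof (rule interval_integral_cong_AE)
    show "AE y \<in> einterval (min 0 (ereal x)) (max 0 (ereal x)) in lborel. g y = p y"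
      using AE by eventually_elim simp
  qed measurable
  then show ?thesis using has_vector_derivative_interval_integral_plus[OF p, of C x] by simp
qed

lemma weak_solution_step_coeff_C1:
  fixes \<phi> :: "real \<Rightarrow> complex"
  assumes H: "H1 \<phi>" and sol: "weak_solution \<mu> (\<lambda>_. c) (step_coeff Gp Gm) \<phi>"
  obtains u D where "AE x in lborel. \<phi> x = u x" "continuous_on UNIV u"
    "\<And>x. (u has_vector_derivative
            (LBINT s=0..x. nls_rhs (\<mu> - c) (step_coeff Gp Gm s) u s) + D) (at x)"
    "integrable lborel (\<lambda>x. (norm (u x))\<^sup>2
            + (norm ((LBINT s=0..x. nls_rhs (\<mu> - c) (step_coeff Gp Gm s) u s) + D))\<^sup>2)"
proof -
  obtain g where L2: "L2 \<phi>" "L2 g" and g: "weak_deriv \<phi> g" using H unfolding H1_def by blast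
  have l\<phi>: "locally_integrable \<phi>" and lg: "locally_integrable g"
    using L2 by (simp_all add: L2_locally_integrable)
  have [measurable]: "\<phi> \<in> borel_measurable borel" "g \<in> borel_measurable borel"
    using L2 by (simp_all add: L2_def)
  obtain C where C: "AE x in lborel. \<phi> x = (LBINT s=0..x. g s) + C"
    using weak_deriv_imp_AE_eq_interval_integral[OF l\<phi> lg] g unfolding weak_deriv_def by blast
  define u where "u = (\<lambda>x::real. (LBINT s=0..x. g s) + C)"
  have uc: "continuous_on UNIV u"
    unfolding u_def by (intro continuous_intros continuous_on_interval_integral_from_0 lg)
  have [measurable]: "u \<in> borel_measurable borel" by (rule borel_measurable_continuous_onI[OF uc])
  have [measurable]: "step_coeff Gp Gm \<in> borel_measurable borel"
    unfolding step_coeff_def by measurable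
  have AE_u: "AE x in lborel. \<phi> x = u x" using C by (simp add: u_def)
  define r where "r = (\<lambda>s. nls_rhs (\<mu> - c) (step_coeff Gp Gm s) u s)"
  have r_piecewise: "r = (\<lambda>s. if 0 \<le> s then nls_rhs (\<mu> - c) Gp u s else nls_rhs (\<mu> - c) Gm u s)"
    by (auto simp: r_def step_coeff_def)
  have lr: "locally_integrable r"
    unfolding r_piecewise by (intro locally_integrable_piecewise continuous_on_nls_rhs uc)
  have [measurable]: "r \<in> borel_measurable borel" by (rule locally_integrable_borel_measurable[OF lr])
  have "integral\<^sup>L lborel (\<lambda>x. g x * of_real (deriv \<psi> x)) = - integral\<^sup>L lborel (\<lambda>x. r x * of_real (\<psi> x))"
    if t: "test_fun \<psi>" for \<psi>
  proof -
    have [measurable]: "\<psi> \<in> borel_measurable borel" by (rule test_fun_borel_measurable[OF t])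
    have "integral\<^sup>L lborel (\<lambda>x. g x * of_real (deriv \<psi> x))
        = integral\<^sup>L lborel (\<lambda>x. of_real (\<mu> - c + step_coeff Gp Gm x * (norm (\<phi> x))\<^sup>2) * \<phi> x * of_real (\<psi> x))"
      by (rule weak_solution_weak_deriv[OF sol g t])
    also have "\<dots> = integral\<^sup>L lborel (\<lambda>x. - (r x * of_real (\<psi> x)))"
      by (rule integral_cong_AE) (measurable, use AE_u in \<open>auto simp: r_def nls_rhs_def\<close>)
    finally show ?thesis by simp
  qed
  then obtain D where D: "AE x in lborel. g x = (LBINT s=0..x. r s) + D"
    using weak_deriv_imp_AE_eq_interval_integral[OF lg lr] by blast
  define p where "p = (\<lambda>x::real. (LBINT s=0..x. r s) + D)"
  have pc: "continuous_on UNIV p"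
    unfolding p_def by (intro continuous_intros continuous_on_interval_integral_from_0 lr)
  have [measurable]: "p \<in> borel_measurable borel" by (rule borel_measurable_continuous_onI[OF pc])
  have AE_g: "AE x in lborel. g x = p x" using D by (simp add: p_def)
  have "(u has_vector_derivative p x) (at x)" for x
    unfolding u_def by (rule has_vector_derivative_interval_integral_AE[OF AE_g pc]) measurable
  moreover have "integrable lborel (\<lambda>x. (norm (u x))\<^sup>2 + (norm (p x))\<^sup>2)"
  proof (rule integrable_cong_AE_imp)
    show "integrable lborel (\<lambda>x. (norm (\<phi> x))\<^sup>2 + (norm (g x))\<^sup>2)"
      using L2 by (intro Bochner_Integration.integrable_add) (auto simp: L2_def)
    show "AE x in lborel. (norm (\<phi> x))\<^sup>2 + (norm (g x))\<^sup>2 = (norm (u x))\<^sup>2 + (norm (p x))\<^sup>2"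
      using AE_u AE_g by eventually_elim simp
  qed measurable
  ultimately show ?thesis
    using that[OF AE_u uc] unfolding p_def r_def by blast
qed

lemma weak_solution_step_coeff_half_line_solutions:
  fixes \<phi> :: "real \<Rightarrow> complex"
  assumes H: "H1 \<phi>" and sol: "weak_solution \<mu> (\<lambda>_. c) (step_coeff Gp Gm) \<phi>"
  obtains u pp pm where "AE x in lborel. \<phi> x = u x"
    "half_line_solution (\<mu> - c) Gp u pp"
    "half_line_solution (\<mu> - c) Gm (\<lambda>x. u (- x)) pm"
    "pm 0 = - pp 0"
    "integrable lborel (\<lambda>x. indicator {0..} x * ((norm (u x))\<^sup>2 + (norm (pp x))\<^sup>2))"
    "integrable lborel (\<lambda>x. indicator {0..} x * ((norm (u (- x)))\<^sup>2 + (norm (pm x))\<^sup>2))"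
proof -
  obtain u D where AE_u: "AE x in lborel. \<phi> x = u x" and uc: "continuous_on UNIV u"
    and du: "\<And>x. (u has_vector_derivative (LBINT s=0..x. nls_rhs (\<mu> - c) (step_coeff Gp Gm s) u s) + D) (at x)"
    and int: "integrable lborel (\<lambda>x. (norm (u x))\<^sup>2
                + (norm ((LBINT s=0..x. nls_rhs (\<mu> - c) (step_coeff Gp Gm s) u s) + D))\<^sup>2)"
    using weak_solution_step_coeff_C1[OF H sol] by blast
  define p where "p = (\<lambda>x::real. (LBINT s=0..x. nls_rhs (\<mu> - c) (step_coeff Gp Gm s) u s) + D)"
  define pp where "pp = (\<lambda>x::real. (LBINT s=0..x. nls_rhs (\<mu> - c) Gp u s) + D)"
  define pm where "pm = (\<lambda>x::real. (LBINT s=0..x. nls_rhs (\<mu> - c) Gm u s) + D)"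
  have p_pp: "p x = pp x" if "0 \<le> x" for x
  proof -
    have "(LBINT s=0..x. nls_rhs (\<mu> - c) (step_coeff Gp Gm s) u s) = (LBINT s=0..x. nls_rhs (\<mu> - c) Gp u s)"
      by (rule interval_integral_cong) (use that in \<open>auto simp: einterval_iff zero_ereal_def step_coeff_def\<close>)
    then show ?thesis by (simp add: p_def pp_def)
  qed
  have p_pm: "p x = pm x" if "x \<le> 0" for x
  proof -
    have "(LBINT s=0..x. nls_rhs (\<mu> - c) (step_coeff Gp Gm s) u s) = (LBINT s=0..x. nls_rhs (\<mu> - c) Gm u s)"
      by (rule interval_integral_cong) (use that in \<open>auto simp: einterval_iff zero_ereal_def step_coeff_def\<close>)
    then show ?thesis by (simp add: p_def pm_def)
  qed
  have dpp: "(pp has_vector_derivative nls_rhs (\<mu> - c) Gp u x) (at x)"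
    and dpm: "(pm has_vector_derivative nls_rhs (\<mu> - c) Gm u x) (at x)" for x
    unfolding pp_def pm_def
    by (intro has_vector_derivative_interval_integral_plus continuous_on_nls_rhs uc)+
  have du_p: "(u has_vector_derivative p x) (at x)" for x
    using du by (simp add: p_def)
  have sol_pos: "half_line_solution (\<mu> - c) Gp u pp"
    unfolding half_line_solution_def using du_p dpp p_pp by metis
  have sol_neg: "half_line_solution (\<mu> - c) Gm (\<lambda>x. u (- x)) (\<lambda>x. - pm (- x))"
    by (rule half_line_solution_reflect) (metis du_p p_pm, rule dpm)
  have pm_pp: "pm 0 = pp 0"
    by (simp add: pm_def pp_def interval_lebesgue_integral_def einterval_same zero_ereal_def
                  set_lebesgue_integral_def)
  have int_p: "integrable lborel (\<lambda>x. (norm (u x))\<^sup>2 + (norm (p x))\<^sup>2)"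
    using int by (simp add: p_def)
  have int_pos: "integrable lborel (\<lambda>x. indicator {0..} x * ((norm (u x))\<^sup>2 + (norm (pp x))\<^sup>2))"
    using integrable_mult_indicator[of "{0..}" lborel, OF _ int_p]
    by (rule back_subst[where P="integrable lborel"]) (auto simp: indicator_def p_pp fun_eq_iff)
  have int_neg: "integrable lborel (\<lambda>x. indicator {0..} x * ((norm (u (- x)))\<^sup>2 + (norm (- pm (- x)))\<^sup>2))"
  proof -
    define h where "h = (\<lambda>x. (norm (u x))\<^sup>2 + (norm (p x))\<^sup>2)"
    have "integrable lborel (\<lambda>x. h (- x))"
      using int_p lborel_integrable_real_affine_iff[of "-1" h 0] by (simp add: h_def[symmetric])
    then have "integrable lborel (\<lambda>x. (norm (u (- x)))\<^sup>2 + (norm (p (- x)))\<^sup>2)"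
      by (simp add: h_def)
    from integrable_mult_indicator[of "{0..}" lborel, OF _ this] show ?thesis
      by (rule back_subst[where P="integrable lborel"]) (auto simp: indicator_def p_pm fun_eq_iff)
  qed
  show ?thesis
    by (rule that[OF AE_u sol_pos sol_neg _ int_pos int_neg]) (simp add: pm_pp)
qed

theorem lemma1p1:
  fixes \<mu> c Gp Gm :: real and \<phi> :: "real \<Rightarrow> complex"
  assumes "Gp \<noteq> Gm"
    and "H1 \<phi>"
    and "weak_solution \<mu> (\<lambda>_. c) (step_coeff Gp Gm) \<phi>"
  shows "AE x in lborel. \<phi> x = 0"
proof -
  obtain u pp pm where AE_u: "AE x in lborel. \<phi> x = u x"
    and sol_pos: "half_line_solution (\<mu> - c) Gp u pp"
    and sol_neg: "half_line_solution (\<mu> - c) Gm (\<lambda>x. u (- x)) pm"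
    and pm0: "pm 0 = - pp 0"
    and int_pos: "integrable lborel (\<lambda>x. indicator {0..} x * ((norm (u x))\<^sup>2 + (norm (pp x))\<^sup>2))"
    and int_neg: "integrable lborel (\<lambda>x. indicator {0..} x * ((norm (u (- x)))\<^sup>2 + (norm (pm x))\<^sup>2))"
    using weak_solution_step_coeff_half_line_solutions[OF assms(2,3)] by blast
  have E_pos: "nls_energy (\<mu> - c) Gp (u 0) (pp 0) = 0"
    using half_line_solution_energy_eq_0[OF sol_pos int_pos] .
  have E_neg: "nls_energy (\<mu> - c) Gm (u 0) (pm 0) = 0"
    using half_line_solution_energy_eq_0[OF sol_neg int_neg] by simp
  have "nls_energy (\<mu> - c) Gp (u 0) (pp 0) - nls_energy (\<mu> - c) Gm (u 0) (pm 0)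
        = (Gp - Gm) / 2 * ((norm (u 0))\<^sup>2)\<^sup>2"
    by (simp add: nls_energy_def pm0 algebra_simps)
  then have u0: "u 0 = 0" using E_pos E_neg assms(1) by simp
  then have "pp 0 = 0" "pm 0 = 0" using E_pos pm0 by (simp_all add: nls_energy_def)
  then have "u x = 0" for x
    using half_line_solution_eq_0[OF sol_pos u0, of x] half_line_solution_eq_0[OF sol_neg _ _, of "- x"] u0
    by (cases "0 \<le> x") auto
  then show ?thesis using AE_u by simp
qed

end
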